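(* Let $I$ be a partially ordered set and let $E$ be a locally convex space which admits an $I$-decreasing base of neighbourhoods of zero. Then $E$ has an $\mathbb{N}^I$-increasing family of bounded sets covering $E$ which swallows all bounded subsets of $E$. Consequently, the strong dual $E'_\beta$ of $E$ has an $\mathbb{N}^I$-decreasing base of neighbourhoods of zero.
   Context: All locally convex spaces are Hausdorff. For a partially ordered set $I$, a family $\{A_i\}_{i\in I}$ of sets is $I$-increasing (resp. $I$-decreasing) if $A_i\subseteq A_j$ (resp. $A_i\supseteq A_j$) whenever $i\le j$. The set $\mathbb{N}^I$ is ordered pointwise: $\alpha\le\beta$ iff $\alpha(i)\le\beta(i)$ for all $i\in I$. A family $\{A_j\}$ swallows a family $\mathcal{B}$ if every $B\in\mathcal{B}$ is contained in some $A_j$. $E'_\beta=(E',\beta(E',E))$ is the topological dual with the topology of uniform convergence on bounded subsets of $E$. *)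

theory Defs
  imports "HOL-Analysis.Analysis"
begin

definition lcs :: "'a::real_vector topology \<Rightarrow> bool" where
  "lcs T \<longleftrightarrow> topspace T = UNIV \<and> Hausdorff_space T
     \<and> continuous_map (prod_topology T T) T (\<lambda>(x, y). x + y)
     \<and> continuous_map (prod_topology euclideanreal T) T (\<lambda>(c, x). c *\<^sub>R x)
     \<and> (\<forall>W. openin T W \<and> 0 \<in> W \<longrightarrow> (\<exists>U. openin T U \<and> 0 \<in> U \<and> convex U \<and> U \<subseteq> W))"

definition nhd0 :: "'a::real_vector topology \<Rightarrow> 'a set \<Rightarrow> bool" where
  "nhd0 T U \<longleftrightarrow> (\<exists>W. openin T W \<and> 0 \<in> W \<and> W \<subseteq> U)"

definition tvs_bounded :: "'a::real_vector topology \<Rightarrow> 'a set \<Rightarrow> bool" where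
  "tvs_bounded T B \<longleftrightarrow>
     (\<forall>U. nhd0 T U \<longrightarrow> (\<exists>s>0. \<forall>t. t \<ge> s \<longrightarrow> B \<subseteq> (\<lambda>x. t *\<^sub>R x) ` U))"

definition tvs_dual :: "'a::real_vector topology \<Rightarrow> ('a \<Rightarrow> real) set" where
  "tvs_dual T = {f. linear f \<and> continuous_map T euclideanreal f}"

text \<open>Neighbourhoods of zero of the strong dual E'_beta, i.e. of the topology of
uniform convergence on bounded subsets of E.\<close>
definition strong_nhd0 :: "'a::real_vector topology \<Rightarrow> ('a \<Rightarrow> real) set \<Rightarrow> bool" where
  "strong_nhd0 T V \<longleftrightarrow> V \<subseteq> tvs_dual T \<and>
     (\<exists>B \<epsilon>. tvs_bounded T B \<and> \<epsilon> > 0 \<and> {f \<in> tvs_dual T. \<forall>x\<in>B. \<bar>f x\<bar> \<le> \<epsilon>} \<subseteq> V)"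

definition nhd_base :: "('b set \<Rightarrow> bool) \<Rightarrow> ('j \<Rightarrow> 'b set) \<Rightarrow> bool" where
  "nhd_base N U \<longleftrightarrow> (\<forall>j. N (U j)) \<and> (\<forall>W. N W \<longrightarrow> (\<exists>j. U j \<subseteq> W))"

text \<open>I-decreasing / I-increasing families (I any ordered index type; for
functions into nat the order is the pointwise one).\<close>
definition decreasing_family :: "('j::order \<Rightarrow> 'b set) \<Rightarrow> bool" where
  "decreasing_family U \<longleftrightarrow> (\<forall>i j. i \<le> j \<longrightarrow> U j \<subseteq> U i)"

definition increasing_family :: "('j::order \<Rightarrow> 'b set) \<Rightarrow> bool" where
  "increasing_family U \<longleftrightarrow> (\<forall>i j. i \<le> j \<longrightarrow> U i \<subseteq> U j)"

end

theory Submission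
  imports Defs
begin

text \<open>With \<open>U\<close> a base of neighbourhoods of zero, put
\<open>B \<alpha> = \<Inter>\<^sub>i \<Union>\<^sub>0\<^sub>\<le>\<^sub>t\<^sub>\<le>\<^sub>\<alpha>\<^sub>i t U\<^sub>i\<close>, the paper's \<open>\<Inter>\<^sub>i \<alpha>(i) U\<^sub>i\<close>; taking all
multiples up to \<open>\<alpha> i\<close> makes \<open>B\<close> increasing without \<open>U\<^sub>i\<close> being balanced. Each \<open>B \<alpha>\<close> is bounded because it lies in a
fixed multiple of any basic neighbourhood \<open>U\<^sub>j\<close>; a bounded set \<open>A\<close> is swallowed
by \<open>B \<alpha>\<close> once \<open>\<alpha> i\<close> exceeds the absorption threshold of \<open>A\<close> by \<open>U\<^sub>i\<close>; and
absorbency of neighbourhoods makes the \<open>B \<alpha>\<close> cover \<open>E\<close>. The polars of an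
increasing family of bounded sets swallowing all bounded sets form a decreasing
base of neighbourhoods of zero for the topology of uniform convergence on
bounded sets.\<close>

definition scaled_inter :: "('i \<Rightarrow> 'a::real_vector set) \<Rightarrow> ('i \<Rightarrow> nat) \<Rightarrow> 'a set" where
  "scaled_inter U \<alpha> = (\<Inter>i. \<Union>t\<in>{0..real (\<alpha> i)}. (*\<^sub>R) t ` U i)"

definition dual_polar :: "'a::real_vector topology \<Rightarrow> 'a set \<Rightarrow> ('a \<Rightarrow> real) set" where
  "dual_polar T A = {f \<in> tvs_dual T. \<forall>x\<in>A. \<bar>f x\<bar> \<le> 1}"

lemma lcs_scaleR_small_nhd0:
  assumes "lcs T" "nhd0 T W"
  shows "\<exists>d>0. \<exists>V. nhd0 T V \<and> (\<forall>c v. \<bar>c\<bar> < d \<longrightarrow> v \<in> V \<longrightarrow> c *\<^sub>R v \<in> W)"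
proof -
  obtain W' where W': "openin T W'" "0 \<in> W'" "W' \<subseteq> W"
    using assms(2) unfolding nhd0_def by blast
  have top: "topspace T = UNIV"
    and cm: "continuous_map (prod_topology euclideanreal T) T (\<lambda>(c, x). c *\<^sub>R x)"
    using assms(1) unfolding lcs_def by auto
  define P where "P = {z \<in> topspace (prod_topology euclideanreal T). (\<lambda>(c, x). c *\<^sub>R x) z \<in> W'}"
  have "openin (prod_topology euclideanreal T) P"
    unfolding P_def by (rule openin_continuous_map_preimage[OF cm W'(1)])
  moreover have "(0::real, 0) \<in> P"
    using W'(2) top by (simp add: P_def)
  ultimately obtain S V where SV: "openin euclideanreal S" "openin T V" "0 \<in> S" "0 \<in> V" "S \<times> V \<subseteq> P"
    unfolding openin_prod_topology_alt by metis
  obtain d where d: "d > 0" "ball 0 d \<subseteq> S"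
    using SV(1,3) by (meson open_contains_ball_eq open_openin)
  have "c *\<^sub>R v \<in> W" if "\<bar>c\<bar> < d" "v \<in> V" for c v
  proof -
    have "(c, v) \<in> S \<times> V" using that d by (auto simp: dist_real_def)
    then show ?thesis using SV(5) W'(3) by (auto simp: P_def)
  qed
  moreover have "nhd0 T V" using SV unfolding nhd0_def by blast
  ultimately show ?thesis using d by blast
qed

lemma lcs_nhd0_absorbing:
  assumes "lcs T" "nhd0 T U"
  shows "\<exists>n::nat. x \<in> (*\<^sub>R) (real n) ` U"
proof -
  have top: "topspace T = UNIV"
    and cm: "continuous_map (prod_topology euclideanreal T) T (\<lambda>(c, x). c *\<^sub>R x)"
    using assms(1) unfolding lcs_def by auto
  obtain W where W: "openin T W" "0 \<in> W" "W \<subseteq> U"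
    using assms(2) unfolding nhd0_def by blast
  have "continuous_map euclideanreal (prod_topology euclideanreal T) (\<lambda>c. (c, x))"
    by (intro continuous_map_pairedI) (auto simp: top)
  from continuous_map_compose[OF this cm]
  have "continuous_map euclideanreal T (\<lambda>c. c *\<^sub>R x)" by (simp add: o_def)
  from openin_continuous_map_preimage[OF this W(1)]
  have "open {c. c *\<^sub>R x \<in> W}" by simp
  moreover have "(0::real) \<in> {c. c *\<^sub>R x \<in> W}" using W by simp
  ultimately obtain d where d: "d > 0" "ball 0 d \<subseteq> {c. c *\<^sub>R x \<in> W}"
    by (meson open_contains_ball_eq)
  obtain n :: nat where "inverse (real (Suc n)) < d"
    using reals_Archimedean d(1) by blast
  then have "inverse (real (Suc n)) \<in> ball 0 d" by (simp add: dist_real_def)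
  then have "inverse (real (Suc n)) *\<^sub>R x \<in> U" using d(2) W(3) by blast
  moreover have "x = real (Suc n) *\<^sub>R (inverse (real (Suc n)) *\<^sub>R x)" by simp
  ultimately show ?thesis by blast
qed

lemma mem_scaled_inter_iff:
  "x \<in> scaled_inter U \<alpha> \<longleftrightarrow> (\<forall>i. \<exists>t. 0 \<le> t \<and> t \<le> real (\<alpha> i) \<and> x \<in> (*\<^sub>R) t ` U i)"
  by (simp add: scaled_inter_def Bex_def)

lemma mem_scaled_inter:
  assumes "\<And>i. x \<in> (*\<^sub>R) (real (\<alpha> i)) ` U i"
  shows "x \<in> scaled_inter U \<alpha>"
  unfolding mem_scaled_inter_iff
proof
  fix i
  show "\<exists>t. 0 \<le> t \<and> t \<le> real (\<alpha> i) \<and> x \<in> (*\<^sub>R) t ` U i"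
    using assms[of i] by (intro exI[of _ "real (\<alpha> i)"]) simp
qed

lemma increasing_family_scaled_inter:
  "increasing_family (scaled_inter (U :: 'i::order \<Rightarrow> 'a::real_vector set))"
  unfolding increasing_family_def
proof (intro allI impI)
  fix \<alpha> \<beta> :: "'i \<Rightarrow> nat" assume "\<alpha> \<le> \<beta>"
  then have "{0..real (\<alpha> i)} \<subseteq> {0..real (\<beta> i)}" for i by (auto simp: le_fun_def)
  then show "scaled_inter U \<alpha> \<subseteq> scaled_inter U \<beta>"
    unfolding scaled_inter_def by (intro INT_anti_mono UN_mono) auto
qed

lemma tvs_bounded_scaled_inter:
  assumes "lcs T" and base: "\<And>W. nhd0 T W \<Longrightarrow> \<exists>j. U j \<subseteq> W"
  shows "tvs_bounded T (scaled_inter U \<alpha>)"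
  unfolding tvs_bounded_def
proof (intro allI impI)
  fix W assume "nhd0 T W"
  then obtain d V where d: "d > 0" "nhd0 T V"
    and small: "\<And>c v. \<bar>c\<bar> < d \<Longrightarrow> v \<in> V \<Longrightarrow> c *\<^sub>R v \<in> W"
    using lcs_scaleR_small_nhd0[OF assms(1)] by metis
  obtain j where j: "U j \<subseteq> V" using base d(2) by blast
  define s where "s = real (\<alpha> j) / d + 1"
  have "real (\<alpha> j) / d \<ge> 0" using d(1) by simp
  then have "s > 0" unfolding s_def by linarith
  moreover have "scaled_inter U \<alpha> \<subseteq> (*\<^sub>R) t ` W" if "t \<ge> s" for t
  proof
    fix x assume "x \<in> scaled_inter U \<alpha>"
    then have "\<exists>c. 0 \<le> c \<and> c \<le> real (\<alpha> j) \<and> x \<in> (*\<^sub>R) c ` U j"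
      unfolding mem_scaled_inter_iff by (rule spec)
    then obtain c u where cu: "0 \<le> c" "c \<le> real (\<alpha> j)" "u \<in> U j" "x = c *\<^sub>R u"
      by auto
    have t: "t > 0" using that \<open>s > 0\<close> by linarith
    have "real (\<alpha> j) / d < t" using that by (simp add: s_def)
    then have "real (\<alpha> j) < t * d" using d(1) by (simp add: divide_less_eq)
    then have "c < t * d" using cu(2) by linarith
    then have "c / t < d" using t by (simp add: divide_less_eq mult.commute)
    then have "\<bar>c / t\<bar> < d" using cu(1) t by simp
    then have "(c / t) *\<^sub>R u \<in> W" using small j cu(3) by blast
    moreover have "x = t *\<^sub>R ((c / t) *\<^sub>R u)" using t cu(4) by simp
    ultimately show "x \<in> (*\<^sub>R) t ` W" by blast
  qed
  ultimately show "\<exists>s>0. \<forall>t. t \<ge> s \<longrightarrow> scaled_inter U \<alpha> \<subseteq> (*\<^sub>R) t ` W" by blast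
qed

lemma scaled_inter_covers:
  assumes "lcs T" "\<And>i. nhd0 T (U i)"
  shows "(\<Union>\<alpha>. scaled_inter U \<alpha>) = UNIV"
proof -
  have "x \<in> (\<Union>\<alpha>. scaled_inter U \<alpha>)" for x
  proof -
    have "\<forall>i. \<exists>n. x \<in> (*\<^sub>R) (real n) ` U i"
      using lcs_nhd0_absorbing[OF assms] by blast
    then obtain \<alpha> where "\<And>i. x \<in> (*\<^sub>R) (real (\<alpha> i)) ` U i" by metis
    then show ?thesis using mem_scaled_inter by blast
  qed
  then show ?thesis by blast
qed

lemma scaled_inter_swallows:
  assumes "\<And>i. nhd0 T (U i)" "tvs_bounded T A"
  shows "\<exists>\<alpha>. A \<subseteq> scaled_inter U \<alpha>"
proof -
  have "\<exists>s. \<forall>t. t \<ge> s \<longrightarrow> A \<subseteq> (*\<^sub>R) t ` U i" for i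
    using assms unfolding tvs_bounded_def by blast
  then obtain s where s: "\<And>i t. t \<ge> s i \<Longrightarrow> A \<subseteq> (*\<^sub>R) t ` U i"
    by metis
  have "s i \<le> real (nat \<lceil>s i\<rceil>)" for i by linarith
  then have "A \<subseteq> (*\<^sub>R) (real (nat \<lceil>s i\<rceil>)) ` U i" for i using s by blast
  then have "A \<subseteq> scaled_inter U (\<lambda>i. nat \<lceil>s i\<rceil>)"
    using mem_scaled_inter[where \<alpha> = "\<lambda>i. nat \<lceil>s i\<rceil>"] by blast
  then show ?thesis by blast
qed

lemma tvs_bounded_scaleR:
  assumes "tvs_bounded T A" "c > 0"
  shows "tvs_bounded T ((*\<^sub>R) c ` A)"
  unfolding tvs_bounded_def
proof (intro allI impI)
  fix N assume "nhd0 T N"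
  then obtain s where s: "s > 0" "\<And>t. t \<ge> s \<Longrightarrow> A \<subseteq> (*\<^sub>R) t ` N"
    using assms(1) unfolding tvs_bounded_def by blast
  have "(*\<^sub>R) c ` A \<subseteq> (*\<^sub>R) t ` N" if "t \<ge> c * s" for t
  proof
    fix y assume "y \<in> (*\<^sub>R) c ` A"
    then obtain x where x: "x \<in> A" "y = c *\<^sub>R x" by blast
    have "t / c \<ge> s" using that assms(2) by (simp add: le_divide_eq mult.commute)
    then obtain n where n: "n \<in> N" "x = (t / c) *\<^sub>R n" using s(2) x(1) by blast
    then have "y = t *\<^sub>R n" using x(2) assms(2) by simp
    then show "y \<in> (*\<^sub>R) t ` N" using n(1) by blast
  qed
  then show "\<exists>s>0. \<forall>t. t \<ge> s \<longrightarrow> (*\<^sub>R) c ` A \<subseteq> (*\<^sub>R) t ` N"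
    using s(1) assms(2) by (intro exI[of _ "c * s"]) auto
qed

lemma strong_nhd0_dual_polar:
  assumes "tvs_bounded T A"
  shows "strong_nhd0 T (dual_polar T A)"
  using assms unfolding strong_nhd0_def dual_polar_def by (intro conjI exI[of _ A] exI[of _ 1]) auto

lemma dual_polar_subset_strong_nhd0:
  assumes "strong_nhd0 T W"
    and swallow: "\<And>A. tvs_bounded T A \<Longrightarrow> \<exists>\<alpha>. A \<subseteq> B \<alpha>"
  shows "\<exists>\<alpha>. dual_polar T (B \<alpha>) \<subseteq> W"
proof -
  obtain A e where A: "tvs_bounded T A" "e > 0" "{f \<in> tvs_dual T. \<forall>x\<in>A. \<bar>f x\<bar> \<le> e} \<subseteq> W"
    using assms(1) unfolding strong_nhd0_def by blast
  obtain \<alpha> where \<alpha>: "(*\<^sub>R) (inverse e) ` A \<subseteq> B \<alpha>"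
    using swallow tvs_bounded_scaleR[OF A(1)] A(2) by (meson positive_imp_inverse_positive)
  have "f \<in> W" if f: "f \<in> dual_polar T (B \<alpha>)" for f
  proof -
    have "\<bar>f x\<bar> \<le> e" if "x \<in> A" for x
    proof -
      have "\<bar>f (inverse e *\<^sub>R x)\<bar> \<le> 1" using f \<alpha> that unfolding dual_polar_def by blast
      then show ?thesis
        using f A(2) linear_scale[of f] by (simp add: dual_polar_def tvs_dual_def abs_mult field_simps)
    qed
    then show ?thesis using A(3) f unfolding dual_polar_def by blast
  qed
  then show ?thesis by blast
qed

lemma nhd_base_strong_nhd0_dual_polar:
  assumes "\<And>\<alpha>. tvs_bounded T (B \<alpha>)" and "\<And>A. tvs_bounded T A \<Longrightarrow> \<exists>\<alpha>. A \<subseteq> B \<alpha>"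
  shows "nhd_base (strong_nhd0 T) (\<lambda>\<alpha>. dual_polar T (B \<alpha>))"
  unfolding nhd_base_def
proof (intro conjI allI impI)
  show "strong_nhd0 T (dual_polar T (B \<alpha>))" for \<alpha>
    by (rule strong_nhd0_dual_polar[OF assms(1)])
  show "\<exists>\<alpha>. dual_polar T (B \<alpha>) \<subseteq> W" if "strong_nhd0 T W" for W
    by (rule dual_polar_subset_strong_nhd0[OF that assms(2)])
qed

lemma decreasing_family_dual_polar:
  assumes "increasing_family B"
  shows "decreasing_family (\<lambda>\<alpha>. dual_polar T (B \<alpha>))"
  using assms unfolding increasing_family_def decreasing_family_def dual_polar_def by blast

theorem proposition2p1:
  fixes T :: "'a::real_vector topology" and U :: "'i::order \<Rightarrow> 'a set"
  assumes "lcs T"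
    and "nhd_base (nhd0 T) U" and "decreasing_family U"
  shows "(\<exists>B :: ('i \<Rightarrow> nat) \<Rightarrow> 'a set.
            (\<forall>\<alpha>. tvs_bounded T (B \<alpha>)) \<and> increasing_family B \<and> (\<Union>\<alpha>. B \<alpha>) = UNIV
            \<and> (\<forall>A. tvs_bounded T A \<longrightarrow> (\<exists>\<alpha>. A \<subseteq> B \<alpha>)))
       \<and> (\<exists>V :: ('i \<Rightarrow> nat) \<Rightarrow> ('a \<Rightarrow> real) set.
            nhd_base (strong_nhd0 T) V \<and> decreasing_family V)"
proof -
  have nhd: "\<And>i. nhd0 T (U i)" and base: "\<And>W. nhd0 T W \<Longrightarrow> \<exists>j. U j \<subseteq> W"
    using assms(2) unfolding nhd_base_def by auto
  let ?B = "scaled_inter U"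
  have bounded: "\<And>\<alpha>. tvs_bounded T (?B \<alpha>)"
    using tvs_bounded_scaled_inter[OF assms(1) base] by blast
  have swallows: "\<And>A. tvs_bounded T A \<Longrightarrow> \<exists>\<alpha>. A \<subseteq> ?B \<alpha>"
    using scaled_inter_swallows[of T U] nhd by blast
  have covers: "(\<Union>\<alpha>. ?B \<alpha>) = UNIV"
    by (rule scaled_inter_covers[OF assms(1) nhd])
  have "(\<forall>\<alpha>. tvs_bounded T (?B \<alpha>)) \<and> increasing_family ?B \<and> (\<Union>\<alpha>. ?B \<alpha>) = UNIV
      \<and> (\<forall>A. tvs_bounded T A \<longrightarrow> (\<exists>\<alpha>. A \<subseteq> ?B \<alpha>))"
    using bounded increasing_family_scaled_inter covers swallows by simp
  moreover have "nhd_base (strong_nhd0 T) (\<lambda>\<alpha>. dual_polar T (?B \<alpha>))"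
    by (rule nhd_base_strong_nhd0_dual_polar[OF bounded swallows])
  moreover have "decreasing_family (\<lambda>\<alpha>. dual_polar T (?B \<alpha>))"
    by (rule decreasing_family_dual_polar[OF increasing_family_scaled_inter])
  ultimately show ?thesis by blast
qed

end
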